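(* Let $\Omega = \Omega_1 \cup \dots \cup \Omega_k$ be a finite grid partitioned into $k$ pairwise disjoint parts ($\Omega_i \cap \Omega_j = \emptyset$ for $i \neq j$), each part being a logically rectangular (structured) set of cells. Suppose the grid has been coarsened by semi-coarsening: in each part $\Omega_m$ a coordinate direction is chosen and the coarse points $\Omega^c_m \subseteq \Omega_m$ are every other line/plane of cells perpendicular to that direction; let $\Omega^c = \Omega^c_1 \cup \dots \cup \Omega^c_k$. Let $P \in \mathbb{R}^{\Omega \times \Omega^c}$ be an interpolation matrix that acts only within parts (i.e. $P_{f,c} = 0$ whenever $f \in \Omega_m$, $c \in \Omega^c_n$ with $m \neq n$), maps coarse points onto themselves (for $c \in \Omega^c_m$ the row of $P$ indexed by $c$ has a single nonzero entry, equal to $1$, in column $c$), and interpolates each fine point $f \in \Omega_m \setminus \Omega^c_m$ using at most two coarse points of $\Omega^c_m$ adjacent to $f$ and aligned with $f$ in the coarsening direction (all other entries of row $f$ are zero). Let $U \in \mathbb{R}^{\Omega \times \Omega}$ be a matrix whose graph contains only connections between boundary points of different parts, i.e. $u_{i,j} = 0$ if $i \in \Omega_m \setminus \delta\Omega_m$ for some $m$, or $j \in \Omega_n \setminus \delta\Omega_n$ for some $n$, and $u_{i,j} = 0$ whenever $i, j \in \Omega_m$ for some $m$. Then the coarse unstructured matrix $U_c = P^T U P \in \mathbb{R}^{\Omega^c \times \Omega^c}$ likewise contains only connections between boundary points of different parts: $u^c_{i,j} = 0$ if $i \in \Omega^c_m \setminus \delta\Omega^c_m$ for some $m$, or $j \in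 \Omega^c_n \setminus \delta\Omega^c_n$ for some $n$, and $u^c_{i,j} = 0$ whenever $i, j \in \Omega^c_m$ for some $m$.
   Context: The part boundary $\delta\Omega_m \subseteq \Omega_m$ is the set of points of $\Omega_m$ that are connected to points of other parts in the graph of $U$ (i.e. $i \in \delta\Omega_m$ iff $u_{i,j} \neq 0$ or $u_{j,i} \neq 0$ for some $j \notin \Omega_m$). The coarse part boundary $\delta\Omega^c_m \subseteq \Omega^c_m$ consists of the coarse points of $\Omega^c_m$ that are either themselves points of $\delta\Omega_m$ or are coarse points used to interpolate some fine point of $\delta\Omega_m$; equivalently, $\delta\Omega^c_m = \{c \in \Omega^c_m : P_{f,c} \neq 0 \text{ for some } f \in \delta\Omega_m\}$. The graph of a matrix has an edge between indices $i$ and $j$ when the $(i,j)$ entry is nonzero. *)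

theory Defs
  imports "HOL-Analysis.Analysis"
begin

text \<open>Matrices are real-valued functions of two point indices; only their entries on the
  relevant index sets (Omega x Omega, Omega x Omega^c) are meaningful.\<close>

definition grid :: "nat \<Rightarrow> (nat \<Rightarrow> 'a set) \<Rightarrow> 'a set" where
  "grid k Om = (\<Union>m<k. Om m)"

definition box :: "nat \<Rightarrow> (nat \<Rightarrow> nat) \<Rightarrow> (nat \<Rightarrow> nat) set" where
  "box d n = {x. (\<forall>i<d. x i < n i) \<and> (\<forall>i\<ge>d. x i = 0)}"

definition adj_aligned :: "nat \<Rightarrow> (nat \<Rightarrow> nat) \<Rightarrow> (nat \<Rightarrow> nat) \<Rightarrow> bool" where
  "adj_aligned dir x y \<longleftrightarrow> (\<forall>i. i \<noteq> dir \<longrightarrow> x i = y i) \<and> (x dir = y dir + 1 \<or> y dir = x dir + 1)"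

definition part_boundary :: "nat \<Rightarrow> (nat \<Rightarrow> 'a set) \<Rightarrow> ('a \<Rightarrow> 'a \<Rightarrow> real) \<Rightarrow> nat \<Rightarrow> 'a set" where
  "part_boundary k Om U m =
     {i \<in> Om m. \<exists>j \<in> grid k Om - Om m. U i j \<noteq> 0 \<or> U j i \<noteq> 0}"

definition coarse_part_boundary ::
  "nat \<Rightarrow> (nat \<Rightarrow> 'a set) \<Rightarrow> (nat \<Rightarrow> 'a set) \<Rightarrow> ('a \<Rightarrow> 'a \<Rightarrow> real) \<Rightarrow> ('a \<Rightarrow> 'a \<Rightarrow> real) \<Rightarrow> nat \<Rightarrow> 'a set" where
  "coarse_part_boundary k Om Omc U P m =
     {c \<in> Omc m. \<exists>f \<in> part_boundary k Om U m. P f c \<noteq> 0}"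

definition coarse_matrix :: "'a set \<Rightarrow> ('a \<Rightarrow> 'a \<Rightarrow> real) \<Rightarrow> ('a \<Rightarrow> 'a \<Rightarrow> real) \<Rightarrow> 'a \<Rightarrow> 'a \<Rightarrow> real" where
  "coarse_matrix Omega P U i j = (\<Sum>f\<in>Omega. \<Sum>g\<in>Omega. P f i * U f g * P g j)"

end

theory Submission
  imports Defs
begin

text \<open>Only the locality of the interpolation matters: a fine point f contributes to the
  coarse column c only if P f c \<noteq> 0, which forces f into the part of c, and then into its
  part boundary whenever U f g \<noteq> 0. So every nonzero term P f i U f g P g j of the Galerkin
  product joins a fine boundary point interpolating i to one interpolating j, in different
  parts.\<close>

lemma coarse_matrix_eq_0I:
  assumes "\<And>f g. f \<in> Omega \<Longrightarrow> g \<in> Omega \<Longrightarrow> P f i \<noteq> 0 \<Longrightarrow> P g j \<noteq> 0 \<Longrightarrow> U f g = 0"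
  shows "coarse_matrix Omega P U i j = 0"
  unfolding coarse_matrix_def using assms by (intro sum.neutral ballI) auto

lemma interpolation_support_in_part:
  assumes P_parts: "\<And>m n f c. m < k \<Longrightarrow> n < k \<Longrightarrow> m \<noteq> n \<Longrightarrow> f \<in> Om m \<Longrightarrow> c \<in> Omc n
                      \<Longrightarrow> P f c = 0"
    and "m < k" "f \<in> grid k Om" "c \<in> Omc m" "P f c \<noteq> 0"
  shows "f \<in> Om m"
proof -
  obtain m' where "m' < k" "f \<in> Om m'"
    using \<open>f \<in> grid k Om\<close> unfolding grid_def by blast
  with P_parts[of m' m f c] assms(2,4,5) show ?thesis by fastforce
qed

lemma interpolation_support_off_boundary:
  assumes P_parts: "\<And>m n f c. m < k \<Longrightarrow> n < k \<Longrightarrow> m \<noteq> n \<Longrightarrow> f \<in> Om m \<Longrightarrow> c \<in> Omc n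
                      \<Longrightarrow> P f c = 0"
    and m: "m < k" and c: "c \<in> Omc m - coarse_part_boundary k Om Omc U P m"
    and f: "f \<in> grid k Om" and Pfc: "P f c \<noteq> 0"
  shows "f \<in> Om m - part_boundary k Om U m"
proof -
  have "f \<in> Om m"
    using P_parts m f DiffD1[OF c] Pfc by (rule interpolation_support_in_part)
  with c Pfc show ?thesis unfolding coarse_part_boundary_def by blast
qed

theorem theorem3p1:
  fixes k d :: nat
    and Om Omc :: "nat \<Rightarrow> 'a set"
    and coord :: "nat \<Rightarrow> 'a \<Rightarrow> (nat \<Rightarrow> nat)"
    and ext :: "nat \<Rightarrow> nat \<Rightarrow> nat"
    and dir par :: "nat \<Rightarrow> nat"
    and P U :: "'a \<Rightarrow> 'a \<Rightarrow> real"
  assumes fin: "finite (grid k Om)"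
    and disj: "\<And>m n. m < k \<Longrightarrow> n < k \<Longrightarrow> m \<noteq> n \<Longrightarrow> Om m \<inter> Om n = {}"
    and struct: "\<And>m. m < k \<Longrightarrow> bij_betw (coord m) (Om m) (box d (ext m))"
    and dir: "\<And>m. m < k \<Longrightarrow> dir m < d"
    and par: "\<And>m. m < k \<Longrightarrow> par m < 2"
    and coarse: "\<And>m. m < k \<Longrightarrow> Omc m = {p \<in> Om m. coord m p (dir m) mod 2 = par m}"
    and P_parts: "\<And>m n f c. m < k \<Longrightarrow> n < k \<Longrightarrow> m \<noteq> n \<Longrightarrow> f \<in> Om m \<Longrightarrow> c \<in> Omc n
                   \<Longrightarrow> P f c = 0"
    and P_coarse: "\<And>m c c'. m < k \<Longrightarrow> c \<in> Omc m \<Longrightarrow> c' \<in> grid k Omc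
                   \<Longrightarrow> P c c' = (if c' = c then 1 else 0)"
    and P_fine: "\<And>m f c. m < k \<Longrightarrow> f \<in> Om m - Omc m \<Longrightarrow> c \<in> grid k Omc \<Longrightarrow> P f c \<noteq> 0
                   \<Longrightarrow> c \<in> Omc m \<and> adj_aligned (dir m) (coord m f) (coord m c)"
    and P_two: "\<And>m f. m < k \<Longrightarrow> f \<in> Om m - Omc m \<Longrightarrow> card {c \<in> grid k Omc. P f c \<noteq> 0} \<le> 2"
    and U_bnd: "\<And>i j. i \<in> grid k Om \<Longrightarrow> j \<in> grid k Om \<Longrightarrow>
                   (\<exists>m<k. i \<in> Om m - part_boundary k Om U m) \<or>
                   (\<exists>n<k. j \<in> Om n - part_boundary k Om U n) \<Longrightarrow> U i j = 0"
    and U_parts: "\<And>m i j. m < k \<Longrightarrow> i \<in> Om m \<Longrightarrow> j \<in> Om m \<Longrightarrow> U i j = 0"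
  shows "(\<forall>i \<in> grid k Omc. \<forall>j \<in> grid k Omc.
            ((\<exists>m<k. i \<in> Omc m - coarse_part_boundary k Om Omc U P m) \<or>
             (\<exists>n<k. j \<in> Omc n - coarse_part_boundary k Om Omc U P n))
            \<longrightarrow> coarse_matrix (grid k Om) P U i j = 0)
       \<and> (\<forall>m<k. \<forall>i \<in> Omc m. \<forall>j \<in> Omc m. coarse_matrix (grid k Om) P U i j = 0)"
proof -
  have in_part: "f \<in> Om m" if "m < k" "f \<in> grid k Om" "c \<in> Omc m" "P f c \<noteq> 0" for m f c
    using P_parts that by (rule interpolation_support_in_part)
  have off_boundary: "f \<in> Om m - part_boundary k Om U m"
    if "m < k" "c \<in> Omc m - coarse_part_boundary k Om Omc U P m" "f \<in> grid k Om" "P f c \<noteq> 0"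
    for m c f
    using P_parts that by (rule interpolation_support_off_boundary)
  have "coarse_matrix (grid k Om) P U i j = 0"
    if "(\<exists>m<k. i \<in> Omc m - coarse_part_boundary k Om Omc U P m) \<or>
        (\<exists>n<k. j \<in> Omc n - coarse_part_boundary k Om Omc U P n)" for i j
  proof (rule coarse_matrix_eq_0I)
    fix f g assume "f \<in> grid k Om" "g \<in> grid k Om" "P f i \<noteq> 0" "P g j \<noteq> 0"
    with that have "(\<exists>m<k. f \<in> Om m - part_boundary k Om U m) \<or>
                    (\<exists>n<k. g \<in> Om n - part_boundary k Om U n)"
      using off_boundary by blast
    with \<open>f \<in> grid k Om\<close> \<open>g \<in> grid k Om\<close> show "U f g = 0" by (rule U_bnd)
  qed
  moreover have "coarse_matrix (grid k Om) P U i j = 0"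
    if m: "m < k" and "i \<in> Omc m" "j \<in> Omc m" for m i j
  proof (rule coarse_matrix_eq_0I)
    fix f g assume "f \<in> grid k Om" "g \<in> grid k Om" "P f i \<noteq> 0" "P g j \<noteq> 0"
    with that have "f \<in> Om m" "g \<in> Om m" using in_part by blast+
    with m show "U f g = 0" by (rule U_parts)
  qed
  ultimately show ?thesis by blast
qed

end
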